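(* Let $A\in\mathbb R^{q\times n}$, $b\in\mathbb R^q$, $c=(c_1,\dots,c_p):\mathbb R^n\to\mathbb R^p$ with each $c_i$ concave and twice continuously differentiable, and $\varepsilon>0$. For $x\in\mathbb R^n$, $y=(y^E,y^I)\in\mathbb R^q\times\mathbb R^p$, $z^I\in\mathbb R^p$ let $$G(x,y,z^I)=\begin{bmatrix}A^Ty^E+\mathcal Jc(x)^Ty^I\\ Ax-b+y^E\\ c(x)+y^I-z^I\end{bmatrix},\qquad F_\varepsilon(x,y,z^I)=\begin{bmatrix}G(x,y,z^I)\\ \Psi_\varepsilon(y^I,z^I)\end{bmatrix},$$ and $\Phi(\varepsilon)=\{(x,y^E,y^I,z^I)\in\mathbb R^n\times\mathbb R^q\times\mathbb R^p\times\mathbb R^p: F_\varepsilon(x,y,z^I)=0\}$. Let $(x,y,z^I)\in\Phi(\varepsilon)$ and suppose that the $n\times n$ matrix $$\sum_{i=1}^p y^I_i\nabla^2c_i(x)-A^TA-\mathcal Jc(x)^T\mathcal J_{z^I}\Psi_\varepsilon(y^I,z^I)\mathcal Jc(x)$$ is nonsingular. Then the Jacobian $\mathcal JF_\varepsilon(x,y,z^I)$ has full row rank, and $$T_{\Phi(\varepsilon)}(x,y,z^I)=\{d\in\mathbb R^n\times\mathbb R^{q+p}\times\mathbb R^p:\mathcal JF_\varepsilon(x,y,z^I)d=0\},$$ $$N_{\Phi(\varepsilon)}(x,y,z^I)=\widehat N_{\Phi(\varepsilon)}(x,y,z^I)=\mathcal JF_\varepsilon(x,y,z^I)^T\mathbb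 R^{n+q+p+p}.$$
   Context: $\mathcal Jc(x)$ is the $p\times n$ Jacobian of $c$. $\psi_\varepsilon(a,b)=a+b-\sqrt{a^2+b^2+2\varepsilon^2}$ (smoothing Fischer–Burmeister function) and $\Psi_\varepsilon(y^I,z^I)=(\psi_\varepsilon(y^I_1,z^I_1),\dots,\psi_\varepsilon(y^I_p,z^I_p))$; $\mathcal J_{z^I}\Psi_\varepsilon(y^I,z^I)$ is the diagonal matrix with entries $1-z^I_i/\sqrt{(y^I_i)^2+(z^I_i)^2+2\varepsilon^2}$. The Jacobian of $F_\varepsilon$ with respect to $(x,y^E,y^I,z^I)$ is $\begin{bmatrix}\sum_i y^I_i\nabla^2c_i(x) & A^T & \mathcal Jc(x)^T & 0\\ A & I & 0 & 0\\ \mathcal Jc(x) & 0 & I & -I\\ 0 & 0 & \mathcal J_{y^I}\Psi_\varepsilon & \mathcal J_{z^I}\Psi_\varepsilon\end{bmatrix}$. $T_C$, $\widehat N_C$, $N_C$ denote the tangent cone, regular normal cone and limiting normal cone of a closed set $C$. *)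

theory Defs
  imports "HOL-Analysis.Analysis"
begin

definition tangent_cone :: "'a::real_normed_vector set \<Rightarrow> 'a \<Rightarrow> 'a set" where
  "tangent_cone C x = {d. \<exists>t xs. (\<forall>k. 0 < t k) \<and> t \<longlonglongrightarrow> 0 \<and> (\<forall>k. xs k \<in> C)
      \<and> (\<lambda>k. (xs k - x) /\<^sub>R t k) \<longlonglongrightarrow> d}"

definition regular_normal_cone :: "'a::real_inner set \<Rightarrow> 'a \<Rightarrow> 'a set" where
  "regular_normal_cone C x = {v. \<forall>e>0. \<exists>\<delta>>0. \<forall>y\<in>C. norm (y - x) < \<delta> \<longrightarrow>
      inner v (y - x) \<le> e * norm (y - x)}"

definition limiting_normal_cone :: "'a::real_inner set \<Rightarrow> 'a \<Rightarrow> 'a set" where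
  "limiting_normal_cone C x = {v. \<exists>xs vs. (\<forall>k. xs k \<in> C) \<and> xs \<longlonglongrightarrow> x \<and> vs \<longlonglongrightarrow> v
      \<and> (\<forall>k. vs k \<in> regular_normal_cone C (xs k))}"

definition psi :: "real \<Rightarrow> real \<Rightarrow> real \<Rightarrow> real" where
  "psi \<epsilon> a b = a + b - sqrt (a\<^sup>2 + b\<^sup>2 + 2 * \<epsilon>\<^sup>2)"

definition Psi :: "real \<Rightarrow> real^'p \<Rightarrow> real^'p \<Rightarrow> real^'p" where
  "Psi \<epsilon> y z = (\<chi> i. psi \<epsilon> (y $ i) (z $ i))"

definition diag_mat :: "real^'p \<Rightarrow> real^'p^'p" where
  "diag_mat d = (\<chi> i j. if i = j then d $ i else 0)"

definition JyPsi :: "real \<Rightarrow> real^'p \<Rightarrow> real^'p \<Rightarrow> real^'p^'p" where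
  "JyPsi \<epsilon> y z = diag_mat (\<chi> i. 1 - y $ i / sqrt ((y $ i)\<^sup>2 + (z $ i)\<^sup>2 + 2 * \<epsilon>\<^sup>2))"

definition JzPsi :: "real \<Rightarrow> real^'p \<Rightarrow> real^'p \<Rightarrow> real^'p^'p" where
  "JzPsi \<epsilon> y z = diag_mat (\<chi> i. 1 - z $ i / sqrt ((y $ i)\<^sup>2 + (z $ i)\<^sup>2 + 2 * \<epsilon>\<^sup>2))"

text \<open>The map F_eps, with Jacobian Jc of c; G is its first three blocks.\<close>

definition F_eps :: "real \<Rightarrow> real^'n^'q \<Rightarrow> real^'q \<Rightarrow> (real^'n \<Rightarrow> real^'p)
    \<Rightarrow> (real^'n \<Rightarrow> real^'n^'p)
    \<Rightarrow> (real^'n) \<times> (real^'q) \<times> (real^'p) \<times> (real^'p) \<Rightarrow> (real^'n) \<times> (real^'q) \<times> (real^'p) \<times> (real^'p)" where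
  "F_eps \<epsilon> A b c Jc = (\<lambda>(x, yE, yI, zI).
     (transpose A *v yE + transpose (Jc x) *v yI,
      A *v x - b + yE,
      c x + yI - zI,
      Psi \<epsilon> yI zI))"

definition Phi :: "real \<Rightarrow> real^'n^'q \<Rightarrow> real^'q \<Rightarrow> (real^'n \<Rightarrow> real^'p)
    \<Rightarrow> (real^'n \<Rightarrow> real^'n^'p) \<Rightarrow> ((real^'n) \<times> (real^'q) \<times> (real^'p) \<times> (real^'p)) set" where
  "Phi \<epsilon> A b c Jc = {w. F_eps \<epsilon> A b c Jc w = 0}"

definition hess_sum :: "('p \<Rightarrow> real^'n \<Rightarrow> real^'n^'n) \<Rightarrow> real^'n \<Rightarrow> real^'p \<Rightarrow> real^'n^'n" where
  "hess_sum H x yI = (\<Sum>i\<in>UNIV. yI $ i *\<^sub>R H i x)"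

definition JF :: "real \<Rightarrow> real^'n^'q \<Rightarrow> (real^'n \<Rightarrow> real^'n^'p) \<Rightarrow> ('p \<Rightarrow> real^'n \<Rightarrow> real^'n^'n)
    \<Rightarrow> (real^'n) \<times> (real^'q) \<times> (real^'p) \<times> (real^'p)
    \<Rightarrow> (real^'n) \<times> (real^'q) \<times> (real^'p) \<times> (real^'p) \<Rightarrow> (real^'n) \<times> (real^'q) \<times> (real^'p) \<times> (real^'p)" where
  "JF \<epsilon> A Jc H = (\<lambda>(x, yE, yI, zI) (dx, dyE, dyI, dzI).
     (hess_sum H x yI *v dx + transpose A *v dyE + transpose (Jc x) *v dyI,
      A *v dx + dyE,
      Jc x *v dx + dyI - dzI,
      JyPsi \<epsilon> yI zI *v dyI + JzPsi \<epsilon> yI zI *v dzI))"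

definition JF_T :: "real \<Rightarrow> real^'n^'q \<Rightarrow> (real^'n \<Rightarrow> real^'n^'p) \<Rightarrow> ('p \<Rightarrow> real^'n \<Rightarrow> real^'n^'n)
    \<Rightarrow> (real^'n) \<times> (real^'q) \<times> (real^'p) \<times> (real^'p)
    \<Rightarrow> (real^'n) \<times> (real^'q) \<times> (real^'p) \<times> (real^'p) \<Rightarrow> (real^'n) \<times> (real^'q) \<times> (real^'p) \<times> (real^'p)" where
  "JF_T \<epsilon> A Jc H = (\<lambda>(x, yE, yI, zI) (w1, w2, w3, w4).
     (transpose (hess_sum H x yI) *v w1 + transpose A *v w2 + transpose (Jc x) *v w3,
      A *v w1 + w2,
      Jc x *v w1 + w3 + transpose (JyPsi \<epsilon> yI zI) *v w4,
      - w3 + transpose (JzPsi \<epsilon> yI zI) *v w4))"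

end

theory Submission
  imports Defs
begin

text \<open>On Phi(eps) we have psi(y_i, z_i) = 0,
  which makes the two diagonal blocks of the Jacobian of Psi add up to the identity; eliminating
  dyE, dzI and dyI from JF d = 0 then leaves the nonsingular Schur complement applied to dx, so JF
  is injective, hence invertible, and so is its adjoint JF_T. A map whose derivative at a point
  is injective is bounded below near it, so the point is isolated in its fibre: (x, y, zI) is an
  isolated point of Phi(eps). At an isolated point the tangent cone is {0} = ker JF, and the
  regular and limiting normal cones are the whole space = range JF_T.\<close>

lemma isolated_in_fibre_of_injective_derivative:
  fixes F :: "'a::real_normed_vector \<Rightarrow> 'b::euclidean_space"
  assumes "(F has_derivative L) (at w)" and "inj L"
  shows "w isolated_in {v. F v = F w}"
proof -
  obtain B where B: "B > 0" "\<And>h. B * norm h \<le> norm (L h)"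
    using linear_inj_bounded_below_pos[OF has_derivative_linear[OF assms(1)] assms(2)] by blast
  obtain d where d: "d > 0"
    and approx: "\<And>v. norm (v - w) < d \<Longrightarrow> norm (F v - F w - L (v - w)) \<le> B / 2 * norm (v - w)"
    using assms(1) B(1) unfolding has_derivative_at_alt by (meson half_gt_zero)
  have "v = w" if "F v = F w" and "dist w v < d" for v
  proof -
    have "B * norm (v - w) \<le> B / 2 * norm (v - w)"
      using B(2)[of "v - w"] approx[of v] that by (simp add: dist_norm norm_minus_commute)
    then show "v = w"
      using B(1) by (simp add: mult_le_cancel_right)
  qed
  then show ?thesis
    using d unfolding isolated_in_dist_Ex_iff by auto
qed

lemma tangent_cone_isolated:
  assumes "x isolated_in C"
  shows "tangent_cone C x = {0}"
proof (intro equalityI subsetI)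
  obtain \<delta> where \<delta>: "\<delta> > 0" "\<And>y. y \<in> C \<Longrightarrow> dist x y < \<delta> \<Longrightarrow> y = x"
    using isolated_inE_dist[OF assms] by blast
  fix d assume "d \<in> tangent_cone C x"
  then obtain t xs where t: "\<forall>k. 0 < t k" "t \<longlonglongrightarrow> 0" "\<forall>k. xs k \<in> C"
    and quot: "(\<lambda>k. (xs k - x) /\<^sub>R t k) \<longlonglongrightarrow> d"
    unfolding tangent_cone_def by blast
  have "(\<lambda>k. t k *\<^sub>R ((xs k - x) /\<^sub>R t k)) \<longlonglongrightarrow> 0 *\<^sub>R d"
    by (intro tendsto_scaleR t(2) quot)
  then have "(\<lambda>k. xs k - x) \<longlonglongrightarrow> 0"
    using t(1) by (simp add: less_imp_neq[symmetric])
  then have "xs \<longlonglongrightarrow> x"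
    by (simp add: LIM_zero_iff)
  then have "eventually (\<lambda>k. dist (xs k) x < \<delta>) sequentially"
    using \<delta>(1) by (rule tendstoD)
  then have "eventually (\<lambda>k. (xs k - x) /\<^sub>R t k = 0) sequentially"
    by eventually_elim (use \<delta>(2) t(3) in \<open>auto simp: dist_commute\<close>)
  then have "(\<lambda>k. (xs k - x) /\<^sub>R t k) \<longlonglongrightarrow> 0"
    by (rule tendsto_eventually)
  then show "d \<in> {0}"
    using quot LIMSEQ_unique by auto
next
  fix d :: 'a assume "d \<in> {0}"
  moreover have "x \<in> C"
    using assms isolated_in_def by blast
  ultimately show "d \<in> tangent_cone C x"
    unfolding tangent_cone_def
    by (auto intro!: exI[of _ "\<lambda>k. inverse (real (Suc k))"] exI[of _ "\<lambda>k. x"] LIMSEQ_inverse_real_of_nat)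
qed

lemma regular_normal_cone_isolated:
  assumes "x isolated_in C"
  shows "regular_normal_cone C x = UNIV"
proof -
  obtain \<delta> where "\<delta> > 0" "\<And>y. y \<in> C \<Longrightarrow> dist x y < \<delta> \<Longrightarrow> y = x"
    using isolated_inE_dist[OF assms] by blast
  then show ?thesis
    unfolding regular_normal_cone_def by (force simp: dist_norm norm_minus_commute)
qed

lemma regular_normal_cone_subset_limiting:
  assumes "x \<in> C"
  shows "regular_normal_cone C x \<subseteq> limiting_normal_cone C x"
proof
  fix v assume "v \<in> regular_normal_cone C x"
  with assms show "v \<in> limiting_normal_cone C x"
    unfolding limiting_normal_cone_def
    by (intro CollectI) (rule exI[of _ "\<lambda>k. x"], rule exI[of _ "\<lambda>k. v"], simp)
qed

lemma diag_mat_mult_nth [simp]: "(diag_mat d *v v) $ i = d $ i * v $ i"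
proof -
  have "(diag_mat d *v v) $ i = (\<Sum>j\<in>UNIV. if i = j then d $ i * v $ j else 0)"
    unfolding diag_mat_def matrix_vector_mult_def vec_lambda_beta by (intro sum.cong) auto
  then show ?thesis by simp
qed

lemma transpose_mult_eq_sum_rows: "transpose M *v y = (\<Sum>i\<in>UNIV. y $ i *\<^sub>R row i M)"
  by (simp add: matrix_mult_sum scalar_mult_eq_scaleR del: transpose_matrix_vector)

lemma sum_matrix_vector_mult: "(\<Sum>i\<in>S. M i) *v v = (\<Sum>i\<in>S. M i *v v)"
  by (induction S rule: infinite_finite_induct) (auto simp: matrix_vector_mult_add_rdistrib)

lemma hess_sum_mult: "hess_sum H x y *v v = (\<Sum>i\<in>UNIV. y $ i *\<^sub>R (H i x *v v))"
  by (simp add: hess_sum_def sum_matrix_vector_mult scaleR_matrix_vector_assoc)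

lemma block_system_only_trivial_solution:
  fixes Q :: "real^'n^'n" and A :: "real^'n^'q" and J :: "real^'n^'p" and Dy Dz :: "real^'p^'p"
  assumes "Dy + Dz = mat 1"
    and "invertible (Q - transpose A ** A - transpose J ** Dz ** J)"
    and "Q *v dx + transpose A *v dyE + transpose J *v dyI = 0"
    and "A *v dx + dyE = 0"
    and "J *v dx + dyI - dzI = 0"
    and "Dy *v dyI + Dz *v dzI = 0"
  shows "dx = 0 \<and> dyE = 0 \<and> dyI = 0 \<and> dzI = 0"
proof -
  have dyE: "dyE = - (A *v dx)"
    using assms(4) by (simp add: eq_neg_iff_add_eq_0 add.commute)
  have dzI: "dzI = dyI + J *v dx"
    using assms(5) by (simp add: algebra_simps)
  have "(Dy + Dz) *v dyI + Dz *v (J *v dx) = 0"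
    using assms(6) by (simp add: dzI matrix_vector_right_distrib matrix_vector_mult_add_rdistrib add.assoc)
  then have dyI: "dyI = - (Dz *v (J *v dx))"
    by (simp add: assms(1) eq_neg_iff_add_eq_0)
  have "(Q - transpose A ** A - transpose J ** Dz ** J) *v dx = 0"
    using assms(3) by (simp add: dyE dyI vec.neg matrix_vector_mult_diff_rdistrib matrix_vector_mul_assoc
        matrix_mul_assoc del: transpose_matrix_vector)
  then have "dx = 0"
    using assms(2) by (metis invertible_def matrix_vector_mul_assoc matrix_vector_mul_lid matrix_vector_mult_0_right)
  then show ?thesis
    by (simp add: dyE dyI dzI)
qed

lemma has_derivative_vec_lambda:
  fixes f :: "'a::real_normed_vector \<Rightarrow> 'i::finite \<Rightarrow> real"
  assumes "\<And>i. ((\<lambda>x. f x i) has_derivative (\<lambda>h. f' h i)) F"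
  shows "((\<lambda>x. \<chi> i. f x i) has_derivative (\<lambda>h. \<chi> i. f' h i)) F"
proof -
  have sum: "(\<chi> i. g i) = (\<Sum>i\<in>UNIV. g i *\<^sub>R axis i (1::real))" for g :: "'i \<Rightarrow> real"
    by (simp add: vec_eq_iff sum_component axis_def if_distrib cong: if_cong)
  have "((\<lambda>x. \<Sum>i\<in>UNIV. f x i *\<^sub>R axis i (1::real)) has_derivative
      (\<lambda>h. \<Sum>i\<in>UNIV. f' h i *\<^sub>R axis i (1::real))) F"
    by (intro has_derivative_sum has_derivative_scaleR_left assms)
  then show ?thesis by (simp only: sum)
qed

lemma has_derivative_psi:
  assumes "\<epsilon> \<noteq> 0" and "(f has_derivative f') (at w within S)" and "(g has_derivative g') (at w within S)"
  shows "((\<lambda>v. psi \<epsilon> (f v) (g v)) has_derivative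
      (\<lambda>h. (1 - f w / sqrt ((f w)\<^sup>2 + (g w)\<^sup>2 + 2 * \<epsilon>\<^sup>2)) * f' h
          + (1 - g w / sqrt ((f w)\<^sup>2 + (g w)\<^sup>2 + 2 * \<epsilon>\<^sup>2)) * g' h)) (at w within S)"
proof -
  have "0 < (f w)\<^sup>2 + (g w)\<^sup>2 + 2 * \<epsilon>\<^sup>2"
    using assms(1) by (simp add: add_nonneg_pos)
  then show ?thesis
    unfolding psi_def
    by (auto intro!: derivative_eq_intros assms(2,3) simp: field_simps)
qed

lemma has_derivative_Psi:
  assumes "\<epsilon> \<noteq> 0" and "(f has_derivative f') (at w within S)" and "(g has_derivative g') (at w within S)"
  shows "((\<lambda>v. Psi \<epsilon> (f v) (g v)) has_derivative
      (\<lambda>h. JyPsi \<epsilon> (f w) (g w) *v f' h + JzPsi \<epsilon> (f w) (g w) *v g' h)) (at w within S)"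
proof -
  have "((\<lambda>v. psi \<epsilon> (f v $ i) (g v $ i)) has_derivative
      (\<lambda>h. (JyPsi \<epsilon> (f w) (g w) *v f' h + JzPsi \<epsilon> (f w) (g w) *v g' h) $ i)) (at w within S)" for i
    using has_derivative_psi[OF assms(1) bounded_linear.has_derivative[OF bounded_linear_vec_nth assms(2)]
        bounded_linear.has_derivative[OF bounded_linear_vec_nth assms(3)]]
    by (simp add: JyPsi_def JzPsi_def)
  then have "((\<lambda>v. \<chi> i. psi \<epsilon> (f v $ i) (g v $ i)) has_derivative
      (\<lambda>h. \<chi> i. (JyPsi \<epsilon> (f w) (g w) *v f' h + JzPsi \<epsilon> (f w) (g w) *v g' h) $ i)) (at w within S)"
    by (rule has_derivative_vec_lambda)
  then show ?thesis
    by (simp only: Psi_def vec_lambda_eta)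
qed

lemma has_derivative_transpose_mult:
  fixes J :: "real^'n \<Rightarrow> real^'n^'p"
  assumes "\<And>i. ((\<lambda>u. row i (J u)) has_derivative (\<lambda>h. H i (f w) *v h)) (at (f w))"
    and "(f has_derivative f') (at w within S)" and "(g has_derivative g') (at w within S)"
  shows "((\<lambda>v. transpose (J (f v)) *v g v) has_derivative
      (\<lambda>h. hess_sum H (f w) (g w) *v f' h + transpose (J (f w)) *v g' h)) (at w within S)"
proof -
  have "((\<lambda>v. \<Sum>i\<in>UNIV. g v $ i *\<^sub>R row i (J (f v))) has_derivative
      (\<lambda>h. \<Sum>i\<in>UNIV. g w $ i *\<^sub>R (H i (f w) *v f' h) + g' h $ i *\<^sub>R row i (J (f w)))) (at w within S)"
    by (intro has_derivative_sum has_derivative_scaleR has_derivative_compose[OF assms(2) assms(1)]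
        bounded_linear.has_derivative[OF bounded_linear_vec_nth assms(3)])
  then show ?thesis
    by (simp add: transpose_mult_eq_sum_rows hess_sum_mult sum.distrib del: transpose_matrix_vector)
qed

lemma F_eps_has_derivative:
  assumes "\<And>u. (c has_derivative (\<lambda>h. Jc u *v h)) (at u)"
    and "\<And>i u. ((\<lambda>v. row i (Jc v)) has_derivative (\<lambda>h. H i u *v h)) (at u)"
    and "\<epsilon> \<noteq> 0"
  shows "(F_eps \<epsilon> A b c Jc has_derivative JF \<epsilon> A Jc H w) (at w)"
proof -
  obtain x yE yI zI where w: "w = (x, yE, yI, zI)" by (cases w)
  have dx: "(fst has_derivative fst) (at w)"
    and dyE: "((\<lambda>v. fst (snd v)) has_derivative (\<lambda>h. fst (snd h))) (at w)"
    and dyI: "((\<lambda>v. fst (snd (snd v))) has_derivative (\<lambda>h. fst (snd (snd h)))) (at w)"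
    and dzI: "((\<lambda>v. snd (snd (snd v))) has_derivative (\<lambda>h. snd (snd (snd h)))) (at w)"
    by (auto intro!: derivative_eq_intros)
  have dJc: "((\<lambda>v. transpose (Jc (fst v)) *v fst (snd (snd v))) has_derivative
      (\<lambda>h. hess_sum H x yI *v fst h + transpose (Jc x) *v fst (snd (snd h)))) (at w)"
    using has_derivative_transpose_mult[where J = Jc and H = H and f = fst and w = w, OF assms(2) dx dyI]
    by (simp add: w)
  have dc: "((\<lambda>v. c (fst v)) has_derivative (\<lambda>h. Jc x *v fst h)) (at w)"
    using has_derivative_compose[OF dx assms(1)] by (simp add: w)
  have dPsi: "((\<lambda>v. Psi \<epsilon> (fst (snd (snd v))) (snd (snd (snd v)))) has_derivative
      (\<lambda>h. JyPsi \<epsilon> yI zI *v fst (snd (snd h)) + JzPsi \<epsilon> yI zI *v snd (snd (snd h)))) (at w)"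
    using has_derivative_Psi[OF assms(3) dyI dzI] by (simp add: w)
  have F: "F_eps \<epsilon> A b c Jc = (\<lambda>v.
     (transpose A *v fst (snd v) + transpose (Jc (fst v)) *v fst (snd (snd v)),
      A *v fst v - b + fst (snd v),
      c (fst v) + fst (snd (snd v)) - snd (snd (snd v)),
      Psi \<epsilon> (fst (snd (snd v))) (snd (snd (snd v)))))"
    by (simp add: F_eps_def fun_eq_iff split: prod.splits del: transpose_matrix_vector)
  have "(F_eps \<epsilon> A b c Jc has_derivative (\<lambda>h.
     (transpose A *v fst (snd h) + (hess_sum H x yI *v fst h + transpose (Jc x) *v fst (snd (snd h))),
      A *v fst h - 0 + fst (snd h),
      Jc x *v fst h + fst (snd (snd h)) - snd (snd (snd h)),
      JyPsi \<epsilon> yI zI *v fst (snd (snd h)) + JzPsi \<epsilon> yI zI *v snd (snd (snd h))))) (at w)"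
    unfolding F
    by (intro has_derivative_Pair has_derivative_add has_derivative_diff has_derivative_const
        dJc dc dPsi dx dyE dyI dzI bounded_linear.has_derivative[OF matrix_vector_mul_bounded_linear])
  then show ?thesis
    by (simp add: w JF_def case_prod_beta' add_ac del: transpose_matrix_vector)
qed

lemma JyPsi_add_JzPsi:
  assumes "\<epsilon> \<noteq> 0" and "Psi \<epsilon> y z = 0"
  shows "JyPsi \<epsilon> y z + JzPsi \<epsilon> y z = mat 1"
proof -
  have sum: "y $ i + z $ i = sqrt ((y $ i)\<^sup>2 + (z $ i)\<^sup>2 + 2 * \<epsilon>\<^sup>2)" for i
    using assms(2) by (simp add: Psi_def psi_def vec_eq_iff)
  have pos: "0 < sqrt ((y $ i)\<^sup>2 + (z $ i)\<^sup>2 + 2 * \<epsilon>\<^sup>2)" for i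
    using assms(1) by (simp add: add_nonneg_pos)
  have unit: "(1 - a / r) + (1 - b / r) = 1" if "a + b = r" and "0 < r" for a b r :: real
  proof -
    have "a * r + b * r = r * r"
      using that(1) by (metis distrib_right)
    then show ?thesis
      using that(2) by (simp add: field_simps)
  qed
  have "(1 - y $ i / sqrt ((y $ i)\<^sup>2 + (z $ i)\<^sup>2 + 2 * \<epsilon>\<^sup>2))
      + (1 - z $ i / sqrt ((y $ i)\<^sup>2 + (z $ i)\<^sup>2 + 2 * \<epsilon>\<^sup>2)) = 1" for i
    using unit[OF sum pos] .
  then show ?thesis
    by (simp add: JyPsi_def JzPsi_def diag_mat_def mat_def vec_eq_iff)
qed

lemma linear_JF: "linear (JF \<epsilon> A Jc H w)"
  by (rule linearI) (auto simp: JF_def case_prod_beta' matrix_vector_right_distrib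
      matrix_vector_mult_scaleR algebra_simps simp del: transpose_matrix_vector)

lemma inj_JF:
  assumes "\<epsilon> \<noteq> 0" and "Psi \<epsilon> yI zI = 0"
    and "invertible (hess_sum H x yI - transpose A ** A - transpose (Jc x) ** JzPsi \<epsilon> yI zI ** Jc x)"
  shows "inj (JF \<epsilon> A Jc H (x, yE, yI, zI))"
  unfolding linear_injective_0[OF linear_JF]
proof (intro allI impI)
  fix d assume JF: "JF \<epsilon> A Jc H (x, yE, yI, zI) d = 0"
  obtain dx dyE dyI dzI where d: "d = (dx, dyE, dyI, dzI)"
    by (cases d)
  have "hess_sum H x yI *v dx + transpose A *v dyE + transpose (Jc x) *v dyI = 0"
    and "A *v dx + dyE = 0" and "Jc x *v dx + dyI - dzI = 0"
    and "JyPsi \<epsilon> yI zI *v dyI + JzPsi \<epsilon> yI zI *v dzI = 0"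
    using JF by (simp_all add: d JF_def zero_prod_def del: transpose_matrix_vector)
  then show "d = 0"
    using block_system_only_trivial_solution[OF JyPsi_add_JzPsi[OF assms(1,2)] assms(3)]
    by (simp add: d zero_prod_def)
qed

lemma adjoint_JF:
  fixes A :: "real^'n^'q" and Jc :: "real^'n \<Rightarrow> real^'n^'p"
  shows "adjoint (JF \<epsilon> A Jc H w) = JF_T \<epsilon> A Jc H w"
proof (rule adjoint_unique, intro allI)
  have mv: "inner (M *v u) v = inner u (transpose M *v v)" for M :: "real^'a^'b" and u v
    by (metis dot_lmul_matrix inner_commute transpose_matrix_vector)
  fix d v :: "(real^'n) \<times> (real^'q) \<times> (real^'p) \<times> (real^'p)"
  show "inner (JF \<epsilon> A Jc H w d) v = inner d (JF_T \<epsilon> A Jc H w v)"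
    by (cases w; cases d; cases v)
      (simp add: JF_def JF_T_def inner_add_left inner_add_right inner_diff_left inner_diff_right
        mv algebra_simps del: transpose_matrix_vector)
qed

theorem proposition4p1:
  fixes A :: "real^'n^'q" and b :: "real^'q"
    and c :: "real^'n \<Rightarrow> real^'p"
    and Jc :: "real^'n \<Rightarrow> real^'n^'p"
    and H :: "'p \<Rightarrow> real^'n \<Rightarrow> real^'n^'n"
    and \<epsilon> :: real
    and x :: "real^'n" and yE :: "real^'q" and yI zI :: "real^'p"
  assumes concave: "\<And>i. concave_on UNIV (\<lambda>u. c u $ i)"
    and jac: "\<And>u. (c has_derivative (\<lambda>h. Jc u *v h)) (at u)"
    and hess: "\<And>i u. ((\<lambda>v. row i (Jc v)) has_derivative (\<lambda>h. H i u *v h)) (at u)"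
    and hess_cont: "\<And>i. continuous_on UNIV (H i)"
    and eps: "\<epsilon> > 0"
    and mem: "(x, yE, yI, zI) \<in> Phi \<epsilon> A b c Jc"
    and nonsing: "invertible (hess_sum H x yI - transpose A ** A
                     - transpose (Jc x) ** JzPsi \<epsilon> yI zI ** Jc x)"
  shows "range (JF \<epsilon> A Jc H (x, yE, yI, zI)) = UNIV
    \<and> tangent_cone (Phi \<epsilon> A b c Jc) (x, yE, yI, zI) = {d. JF \<epsilon> A Jc H (x, yE, yI, zI) d = 0}
    \<and> limiting_normal_cone (Phi \<epsilon> A b c Jc) (x, yE, yI, zI)
        = regular_normal_cone (Phi \<epsilon> A b c Jc) (x, yE, yI, zI)
    \<and> regular_normal_cone (Phi \<epsilon> A b c Jc) (x, yE, yI, zI)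
        = range (JF_T \<epsilon> A Jc H (x, yE, yI, zI))"
proof -
  define w where "w = (x, yE, yI, zI)"
  have "\<epsilon> \<noteq> 0"
    using eps by simp
  have F0: "F_eps \<epsilon> A b c Jc w = 0"
    using mem by (simp add: Phi_def w_def)
  then have Psi0: "Psi \<epsilon> yI zI = 0"
    by (simp add: w_def F_eps_def zero_prod_def)
  have inj: "inj (JF \<epsilon> A Jc H w)"
    unfolding w_def using inj_JF[where Jc = Jc and x = x, OF \<open>\<epsilon> \<noteq> 0\<close> Psi0 nonsing] .
  have iso: "w isolated_in Phi \<epsilon> A b c Jc"
    using isolated_in_fibre_of_injective_derivative
        [OF F_eps_has_derivative[where b = b, OF jac hess \<open>\<epsilon> \<noteq> 0\<close>] inj]
    by (simp add: Phi_def F0)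
  have "surj (JF \<epsilon> A Jc H w)"
    using linear_inj_imp_surj[OF linear_JF inj] .
  moreover have "{d. JF \<epsilon> A Jc H w d = 0} = {0}"
    using inj linear_JF linear_injective_0 linear_0 by blast
  moreover have "surj (JF_T \<epsilon> A Jc H w)"
    using surj_adjoint_iff_inj[OF linear_JF, of \<epsilon> A Jc H w] inj unfolding adjoint_JF by blast
  moreover have "limiting_normal_cone (Phi \<epsilon> A b c Jc) w = UNIV"
    using regular_normal_cone_subset_limiting[of w] iso regular_normal_cone_isolated[OF iso]
    by (auto simp: isolated_in_def)
  ultimately show ?thesis
    using tangent_cone_isolated[OF iso] regular_normal_cone_isolated[OF iso] by (simp add: w_def)
qed

end
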